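(* Let $n\ge2$, let $T_0$ be a tagged $n$-simplex and let $\widehat T$ be a Kuhn simplex. Then every simplex $T$ obtained from $T_0$ by successive applications of Maubach's bisection satisfies $$\gamma(T)\le2\,\gamma(\widehat T)\,\frac{\operatorname{diam}(\widehat T)}{w(\widehat T)}\,\gamma(T_0).$$
   Context: A Kuhn simplex is $[0,e_{\pi(1)},e_{\pi(1)}+e_{\pi(2)},\dots,e_{\pi(1)}+\dots+e_{\pi(n)}]$ for a permutation $\pi$ of $\{1,\dots,n\}$ and unit vectors $e_i$. A tagged $n$-simplex is $[v_0,\dots,v_n]_\gamma$ with tag $\gamma\in\{1,\dots,n\}$; Maubach's bisection: $v'=(v_0+v_\gamma)/2$, $\gamma'=\gamma-1$ if $\gamma\ge2$ and $n$ otherwise, children $[v_0,\dots,v_{\gamma-1},v',v_{\gamma+1},\dots,v_n]_{\gamma'}$ and $[v_1,\dots,v_\gamma,v',v_{\gamma+1},\dots,v_n]_{\gamma'}$. For a simplex $S$: $\gamma(S)=R(S)/r(S)$ with $R(S)$ the diameter of the smallest ball containing $S$, $r(S)$ the diameter of the largest ball contained in $S$; $w(S)=\min_f\sup_{x\in S}\operatorname{dist}(x,f)$ over the $(n-1)$-dimensional faces $f$ of $S$ (minimal height). *)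

theory Defs
  imports "HOL-Analysis.Analysis"
begin

text \<open>A (tagged) n-simplex is represented by its vertex map v (only v 0, ..., v n matter)
  together with its tag.\<close>

type_synonym 'a tsimplex = "(nat \<Rightarrow> 'a) \<times> nat"

definition simplex_set :: "nat \<Rightarrow> (nat \<Rightarrow> 'a::euclidean_space) \<Rightarrow> 'a set" where
  "simplex_set n v = convex hull (v ` {..n})"

definition is_nsimplex :: "nat \<Rightarrow> (nat \<Rightarrow> 'a::euclidean_space) \<Rightarrow> bool" where
  "is_nsimplex n v \<longleftrightarrow> inj_on v {..n} \<and> \<not> affine_dependent (v ` {..n})"

definition is_tagged_nsimplex :: "nat \<Rightarrow> 'a::euclidean_space tsimplex \<Rightarrow> bool" where
  "is_tagged_nsimplex n T \<longleftrightarrow> is_nsimplex n (fst T) \<and> snd T \<in> {1..n}"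

definition new_tag :: "nat \<Rightarrow> nat \<Rightarrow> nat" where
  "new_tag n g = (if g \<ge> 2 then g - 1 else n)"

definition bisect_left :: "nat \<Rightarrow> 'a::euclidean_space tsimplex \<Rightarrow> 'a tsimplex" where
  "bisect_left n T = (let v = fst T; g = snd T; m = (1/2) *\<^sub>R (v 0 + v g)
     in ((\<lambda>i. if i = g then m else v i), new_tag n g))"

definition bisect_right :: "nat \<Rightarrow> 'a::euclidean_space tsimplex \<Rightarrow> 'a tsimplex" where
  "bisect_right n T = (let v = fst T; g = snd T; m = (1/2) *\<^sub>R (v 0 + v g)
     in ((\<lambda>i. if i < g then v (Suc i) else if i = g then m else v i), new_tag n g))"

inductive_set maubach_desc :: "nat \<Rightarrow> 'a::euclidean_space tsimplex \<Rightarrow> 'a tsimplex set"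
  for n :: nat and T0 :: "'a tsimplex" where
  base: "T0 \<in> maubach_desc n T0"
| left: "T \<in> maubach_desc n T0 \<Longrightarrow> bisect_left n T \<in> maubach_desc n T0"
| right: "T \<in> maubach_desc n T0 \<Longrightarrow> bisect_right n T \<in> maubach_desc n T0"

text \<open>Kuhn simplex: vertices 0, e_{pi 1}, e_{pi 1} + e_{pi 2}, ...; pi is a bijection
  from {1..n} onto the standard basis.\<close>

definition kuhn_vertices :: "(nat \<Rightarrow> 'a::euclidean_space) \<Rightarrow> nat \<Rightarrow> 'a" where
  "kuhn_vertices \<pi> k = (\<Sum>j\<in>{1..k}. \<pi> j)"

text \<open>R(S): diameter of the smallest ball containing S; r(S): diameter of the largest ball
  contained in S; gamma(S) = R(S)/r(S).\<close>

definition outer_diam :: "'a::euclidean_space set \<Rightarrow> real" where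
  "outer_diam S = Inf {2 * r | c r. S \<subseteq> cball c r}"

definition inner_diam :: "'a::euclidean_space set \<Rightarrow> real" where
  "inner_diam S = Sup {2 * r | c r. 0 \<le> r \<and> cball c r \<subseteq> S}"

definition shape_reg :: "'a::euclidean_space set \<Rightarrow> real" where
  "shape_reg S = outer_diam S / inner_diam S"

definition min_height :: "nat \<Rightarrow> (nat \<Rightarrow> 'a::euclidean_space) \<Rightarrow> real" where
  "min_height n v = Min ((\<lambda>i. SUP x\<in>simplex_set n v. infdist x (convex hull (v ` ({..n} - {i})))) ` {..n})"

end

theory Submission
  imports Defs
begin

(* In suitable coordinates, T0 is the reference simplex of its tag g, with vertices
   c_g(j) (e_1 + ... + e_j), where c_g(j) = 1 for j <= g and 1/2 beyond.  Maubach's bisection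
   acts combinatorially on such coordinates: every descendant is a "frame simplex"
   o + h * (a signed, permuted copy of the reference simplex of its own tag).  Comparing the
   barycentric coordinates of two frame simplices shows that each lies in a homothetic copy of
   the other, and the two ratios multiply to at most (5n/4)^2.  Homotheties scale the outer and
   the inner diameter alike, so gamma(T) <= (5n/4)^2 gamma(T0).  Explicit estimates for the Kuhn
   simplex K (R >= sqrt n, r <= 2 / (2 + (n - 1) sqrt 2), diam >= sqrt n, w <= 1 / sqrt 2) give
   gamma(K) diam(K) / w(K) >= n^2, which absorbs the constant. *)

section \<open>Inner and outer diameters under homotheties\<close>

lemma outer_diam_le:
  fixes S :: "'a::euclidean_space set"
  assumes "S \<subseteq> cball c r" and "S \<noteq> {}"
  shows "outer_diam S \<le> 2 * r"
  unfolding outer_diam_def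
proof (rule cInf_lower)
  show "2 * r \<in> {2 * r |c r. S \<subseteq> cball c r}" using assms(1) by blast
  obtain y where y: "y \<in> S" using assms(2) by blast
  have "0 \<le> 2 * r'" if "S \<subseteq> cball c' r'" for c' r'
  proof -
    have "dist c' y \<le> r'" using that y by auto
    then show ?thesis using zero_le_dist[of c' y] by linarith
  qed
  then show "bdd_below {2 * r |c r. S \<subseteq> cball c r}" by (auto intro!: bdd_belowI[where m = 0])
qed

lemma outer_diam_ge:
  fixes S :: "'a::euclidean_space set"
  assumes "bounded S" and "\<And>c r. S \<subseteq> cball c r \<Longrightarrow> d \<le> 2 * r"
  shows "d \<le> outer_diam S"
  unfolding outer_diam_def
proof (rule cInf_greatest)
  obtain c r where "S \<subseteq> cball c r" using assms(1) bounded_subset_cball by blast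
  then show "{2 * r |c r. S \<subseteq> cball c r} \<noteq> {}" by blast
qed (use assms(2) in blast)

lemma outer_diam_nonneg:
  fixes S :: "'a::euclidean_space set"
  assumes "bounded S" and "S \<noteq> {}"
  shows "0 \<le> outer_diam S"
proof (rule outer_diam_ge[OF assms(1)])
  fix c r assume "S \<subseteq> cball c r"
  moreover obtain y where "y \<in> S" using assms(2) by blast
  ultimately have "dist c y \<le> r" by auto
  then show "0 \<le> 2 * r" using zero_le_dist[of c y] by linarith
qed

lemma inner_diam_ge:
  fixes S :: "'a::euclidean_space set"
  assumes "bounded S" and "0 \<le> r" and "cball c r \<subseteq> S"
  shows "2 * r \<le> inner_diam S"
  unfolding inner_diam_def
proof (rule cSup_upper)
  show "2 * r \<in> {2 * r |c r. 0 \<le> r \<and> cball c r \<subseteq> S}" using assms(2,3) by blast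
  have "2 * r' \<le> diameter S" if "0 \<le> r'" "cball c' r' \<subseteq> S" for c' r'
    using diameter_subset[OF that(2) assms(1)] that(1) by simp
  then show "bdd_above {2 * r |c r. 0 \<le> r \<and> cball c r \<subseteq> S}"
    by (auto intro!: bdd_aboveI[where M = "diameter S"])
qed

lemma inner_diam_le:
  fixes S :: "'a::euclidean_space set"
  assumes "S \<noteq> {}" and "\<And>c r. 0 \<le> r \<Longrightarrow> cball c r \<subseteq> S \<Longrightarrow> 2 * r \<le> d"
  shows "inner_diam S \<le> d"
  unfolding inner_diam_def
proof (rule cSup_least)
  obtain y where "y \<in> S" using assms(1) by blast
  then have "cball y 0 \<subseteq> S" by simp
  then show "{2 * r |c r. 0 \<le> r \<and> cball c r \<subseteq> S} \<noteq> {}" by blast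
qed (use assms(2) in blast)

lemma outer_diam_subset_homothetic:
  fixes S S' :: "'a::euclidean_space set"
  assumes sub: "S \<subseteq> (\<lambda>x. p + s *\<^sub>R x) ` S'" and s: "0 < s" and "bounded S'" and "S \<noteq> {}"
  shows "outer_diam S \<le> s * outer_diam S'"
proof -
  have "outer_diam S / s \<le> outer_diam S'"
  proof (rule outer_diam_ge[OF \<open>bounded S'\<close>])
    fix c r assume c: "S' \<subseteq> cball c r"
    have "S \<subseteq> cball (p + s *\<^sub>R c) (s * r)"
    proof
      fix y assume "y \<in> S"
      then obtain z where "z \<in> S'" "y = p + s *\<^sub>R z" using sub by blast
      moreover have "dist (p + s *\<^sub>R c) (p + s *\<^sub>R z) = s * dist c z"
        using s by (simp add: dist_norm scaleR_diff_right[symmetric])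
      ultimately show "y \<in> cball (p + s *\<^sub>R c) (s * r)"
        using c s by (auto simp: subset_eq)
    qed
    then have "outer_diam S \<le> 2 * (s * r)" by (rule outer_diam_le) fact
    then show "outer_diam S / s \<le> 2 * r" using s by (simp add: field_simps)
  qed
  then show ?thesis using s by (simp add: field_simps)
qed

lemma inner_diam_subset_homothetic:
  fixes S S' :: "'a::euclidean_space set"
  assumes sub: "S \<subseteq> (\<lambda>x. p + s *\<^sub>R x) ` S'" and s: "0 < s" and "bounded S'" and "S \<noteq> {}"
  shows "inner_diam S \<le> s * inner_diam S'"
proof (rule inner_diam_le[OF \<open>S \<noteq> {}\<close>])
  fix c r assume r: "0 \<le> r" and c: "cball c r \<subseteq> S"
  have sub': "cball ((1/s) *\<^sub>R (c - p)) (r / s) \<subseteq> S'"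
  proof
    fix z assume z: "z \<in> cball ((1/s) *\<^sub>R (c - p)) (r / s)"
    have "c - (p + s *\<^sub>R z) = s *\<^sub>R ((1/s) *\<^sub>R (c - p) - z)" using s by (simp add: algebra_simps)
    then have "dist c (p + s *\<^sub>R z) = s * dist ((1/s) *\<^sub>R (c - p)) z"
      using s by (simp add: dist_norm)
    also have "\<dots> \<le> r" using z s by (simp add: field_simps)
    finally have "p + s *\<^sub>R z \<in> S" using c by auto
    then obtain w where "w \<in> S'" "p + s *\<^sub>R z = p + s *\<^sub>R w" using sub by blast
    then show "z \<in> S'" using s by simp
  qed
  have "2 * (r / s) \<le> inner_diam S'"
    using inner_diam_ge[OF \<open>bounded S'\<close> _ sub'] r s by simp
  then show "2 * r \<le> s * inner_diam S'" using s by (simp add: field_simps)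
qed

lemma shape_reg_nonneg:
  fixes S :: "'a::euclidean_space set"
  assumes "bounded S" and "S \<noteq> {}"
  shows "0 \<le> shape_reg S"
proof -
  obtain y where "y \<in> S" using assms(2) by blast
  then have "0 \<le> inner_diam S" using inner_diam_ge[OF assms(1), of 0 y] by simp
  then show ?thesis using outer_diam_nonneg[OF assms] by (simp add: shape_reg_def)
qed

lemma shape_reg_le_mutually_homothetic:
  fixes S S0 :: "'a::euclidean_space set"
  assumes S: "S \<subseteq> (\<lambda>x. p + s *\<^sub>R x) ` S0" and S0: "S0 \<subseteq> (\<lambda>x. q + t *\<^sub>R x) ` S"
    and st: "0 < s" "0 < t" and bdd: "bounded S" "bounded S0" and ne: "S \<noteq> {}" "S0 \<noteq> {}"
    and r0: "0 < inner_diam S0"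
  shows "shape_reg S \<le> s * t * shape_reg S0"
proof -
  have R: "outer_diam S \<le> s * outer_diam S0"
    by (rule outer_diam_subset_homothetic[OF S st(1) bdd(2) ne(1)])
  have r: "inner_diam S0 / t \<le> inner_diam S"
    using inner_diam_subset_homothetic[OF S0 st(2) bdd(1) ne(2)] st by (simp add: field_simps)
  have r_pos: "0 < inner_diam S0 / t" using r0 st by simp
  then have rS: "0 < inner_diam S" using r by linarith
  have "shape_reg S \<le> s * outer_diam S0 / inner_diam S"
    unfolding shape_reg_def using R r r_pos by (intro divide_right_mono) auto
  also have "\<dots> \<le> s * outer_diam S0 / (inner_diam S0 / t)"
    using r r_pos rS st outer_diam_nonneg[OF bdd(2) ne(2)] by (intro divide_left_mono mult_pos_pos) auto
  also have "\<dots> = s * t * shape_reg S0" using st r0 by (simp add: shape_reg_def field_simps)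
  finally show ?thesis .
qed

lemma convex_hull_subset_homothetic:
  fixes P Q :: "'i \<Rightarrow> 'a::real_vector"
  assumes "finite I" and Q: "\<And>j. j \<in> J \<Longrightarrow>
      \<exists>a. (\<forall>i\<in>I. m i \<le> a i) \<and> sum a I = 1 \<and> Q j = (\<Sum>i\<in>I. a i *\<^sub>R P i)"
    and m: "sum m I = 1 - s" and s: "0 < s"
  shows "convex hull (Q ` J) \<subseteq> (\<lambda>x. (\<Sum>i\<in>I. m i *\<^sub>R P i) + s *\<^sub>R x) ` (convex hull (P ` I))"
proof (rule hull_minimal)
  show "convex ((\<lambda>x. (\<Sum>i\<in>I. m i *\<^sub>R P i) + s *\<^sub>R x) ` (convex hull (P ` I)))"
    by (rule convex_affinity) (rule convex_convex_hull)
  show "Q ` J \<subseteq> (\<lambda>x. (\<Sum>i\<in>I. m i *\<^sub>R P i) + s *\<^sub>R x) ` (convex hull (P ` I))"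
  proof
    fix z assume "z \<in> Q ` J"
    then obtain j a where j: "z = Q j" and a: "\<forall>i\<in>I. m i \<le> a i" "sum a I = 1"
      "Q j = (\<Sum>i\<in>I. a i *\<^sub>R P i)" using Q by blast
    \<comment> \<open>the excess weights \<open>a - m\<close>, rescaled by \<open>1/s\<close>, are convex weights\<close>
    define c where "c i = (a i - m i) / s" for i
    have "(\<Sum>i\<in>I. c i *\<^sub>R P i) \<in> convex hull (P ` I)"
      by (rule convex_sum[OF \<open>finite I\<close> convex_convex_hull])
        (use a m s in \<open>auto simp: c_def sum_divide_distrib[symmetric] sum_subtractf intro: hull_inc\<close>)
    moreover have "z = (\<Sum>i\<in>I. m i *\<^sub>R P i) + s *\<^sub>R (\<Sum>i\<in>I. c i *\<^sub>R P i)"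
      using s j a(3) by (simp add: scaleR_sum_right c_def scaleR_diff_left sum_subtractf)
    ultimately show "z \<in> (\<lambda>x. (\<Sum>i\<in>I. m i *\<^sub>R P i) + s *\<^sub>R x) ` (convex hull (P ` I))" by blast
  qed
qed

lemma simplex_set_bounded: "bounded (simplex_set n v)"
  unfolding simplex_set_def by (intro compact_imp_bounded compact_convex_hull finite_imp_compact) simp

lemma simplex_set_nonempty: "simplex_set n v \<noteq> {}"
  unfolding simplex_set_def by simp

lemma vertex_in_simplex_set: "j \<le> n \<Longrightarrow> v j \<in> simplex_set n v"
  unfolding simplex_set_def by (rule hull_inc) simp

lemma inner_diam_simplex_set_pos:
  fixes v :: "nat \<Rightarrow> 'a::euclidean_space"
  assumes n: "n = DIM('a)" and v: "is_nsimplex n v"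
  shows "0 < inner_diam (simplex_set n v)"
proof -
  let ?V = "v ` {..n}"
  have indep: "\<not> affine_dependent ?V" and card: "card ?V = n + 1"
    using v card_image[of v "{..n}"] by (auto simp: is_nsimplex_def)
  have "n \<ge> 1" using n DIM_positive[where 'a='a] by linarith
  define u where "u (x::'a) = 1 / (real n + 1)" for x
  have "\<forall>x\<in>?V. 0 < u x \<and> u x < 1" "sum u ?V = 1"
    using \<open>n \<ge> 1\<close> card by (simp_all add: u_def)
  then have "(\<Sum>x\<in>?V. u x *\<^sub>R x) \<in> interior (convex hull ?V)"
    unfolding interior_convex_hull_explicit[OF indep] using card n by auto
  then obtain y e where "0 < e" "ball y e \<subseteq> interior (convex hull ?V)"
    using open_contains_ball[of "interior (convex hull ?V)"] by blast
  then have "0 < e / 2" and ball: "cball y (e / 2) \<subseteq> simplex_set n v"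
    using interior_subset[of "convex hull ?V"] by (auto simp: simplex_set_def subset_eq)
  then show ?thesis using inner_diam_ge[OF simplex_set_bounded _ ball] by simp
qed

section \<open>Frame simplices\<close>

lemma sum_telescope_atLeastAtMost:
  "m \<le> Suc n \<Longrightarrow> (\<Sum>i=m..n. f i - f (Suc i)) = f m - (f (Suc n) :: 'a::ab_group_add)"
  by (induct n) (auto simp: le_Suc_eq)

definition tag_scale :: "nat \<Rightarrow> nat \<Rightarrow> real" where
  "tag_scale g j = (if j \<le> g then 1 else 1/2)"

lemma tag_scale_pos: "0 < tag_scale g j"
  by (simp add: tag_scale_def)

lemma tag_scale_antimono: "i \<le> j \<Longrightarrow> tag_scale g j \<le> tag_scale g i"
  by (simp add: tag_scale_def)

text \<open>A frame \<open>F\<close> describes, in coordinates \<open>x 1, \<dots>, x n\<close>, the simplex with vertices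
  \<open>frame_vertex F 0, \<dots>, frame_vertex F n\<close>: vertex \<open>j\<close> is reached from \<open>fr_origin F\<close> by the
  steps \<open>fr_sign F k * e\<^sub>k\<close> for all coordinates \<open>k\<close> with \<open>fr_rank F k \<le> j\<close>, scaled by
  \<open>fr_len F * tag_scale (fr_tag F) j\<close>.  \<open>frame_level\<close> reads off these steps and \<open>frame_bary\<close>
  turns them into barycentric coordinates; \<open>frame_map n F v\<close> is the affine map sending the
  vertices of \<open>F\<close> to \<open>v 0, \<dots>, v n\<close>.\<close>

record frame =
  fr_origin :: "nat \<Rightarrow> real"
  fr_len :: real
  fr_rank :: "nat \<Rightarrow> nat"
  fr_sign :: "nat \<Rightarrow> real"
  fr_tag :: nat

definition frame_vertex :: "frame \<Rightarrow> nat \<Rightarrow> nat \<Rightarrow> real" where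
  "frame_vertex F j k = fr_origin F k
     + fr_len F * tag_scale (fr_tag F) j * (if fr_rank F k \<le> j then fr_sign F k else 0)"

definition is_frame :: "nat \<Rightarrow> frame \<Rightarrow> bool" where
  "is_frame n F \<longleftrightarrow> 0 < fr_len F \<and> inj_on (fr_rank F) {1..n} \<and> fr_rank F ` {1..n} \<subseteq> {1..n}
     \<and> (\<forall>k. fr_sign F k \<in> {-1, 1}) \<and> fr_tag F \<in> {1..n}"

definition frame_fibre :: "nat \<Rightarrow> frame \<Rightarrow> nat \<Rightarrow> nat set" where
  "frame_fibre n F m = {k \<in> {1..n}. fr_rank F k = m}"

definition frame_level :: "nat \<Rightarrow> frame \<Rightarrow> (nat \<Rightarrow> real) \<Rightarrow> nat \<Rightarrow> real" where
  "frame_level n F x m = (\<Sum>k\<in>frame_fibre n F m. fr_sign F k * (x k - fr_origin F k)) / fr_len F"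

definition frame_bary :: "nat \<Rightarrow> frame \<Rightarrow> (nat \<Rightarrow> real) \<Rightarrow> nat \<Rightarrow> real" where
  "frame_bary n F x i =
     (if i = 0 then 1 - (\<Sum>j=1..n. (frame_level n F x j - frame_level n F x (Suc j)) / tag_scale (fr_tag F) j)
      else (frame_level n F x i - frame_level n F x (Suc i)) / tag_scale (fr_tag F) i)"

definition frame_map :: "nat \<Rightarrow> frame \<Rightarrow> (nat \<Rightarrow> 'a::real_vector) \<Rightarrow> (nat \<Rightarrow> real) \<Rightarrow> 'a" where
  "frame_map n F v x = (\<Sum>i\<le>n. frame_bary n F x i *\<^sub>R v i)"

definition ref_frame :: "nat \<Rightarrow> frame" where
  "ref_frame g = \<lparr>fr_origin = \<lambda>_. 0, fr_len = 1, fr_rank = id, fr_sign = \<lambda>_. 1, fr_tag = g\<rparr>"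

lemma is_frame_ref_frame: "g \<in> {1..n} \<Longrightarrow> is_frame n (ref_frame g)"
  by (auto simp: is_frame_def ref_frame_def)

lemma is_frameD:
  assumes "is_frame n F"
  shows "0 < fr_len F" and "inj_on (fr_rank F) {1..n}" and "k \<in> {1..n} \<Longrightarrow> fr_rank F k \<in> {1..n}"
    and "fr_sign F k = 1 \<or> fr_sign F k = -1" and "1 \<le> fr_tag F" and "fr_tag F \<le> n"
  using assms by (auto simp: is_frame_def image_subset_iff)

lemma frame_fibre_Suc_empty: "is_frame n F \<Longrightarrow> frame_fibre n F (Suc n) = {}"
  by (force simp: frame_fibre_def dest: is_frameD(3))

lemma frame_bary_sum: "(\<Sum>i\<le>n. frame_bary n F x i) = 1"
  by (simp add: atMost_atLeast0 sum.atLeast_Suc_atMost frame_bary_def)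

lemma frame_level_cong:
  "(\<And>k. k \<in> {1..n} \<Longrightarrow> x k = y k) \<Longrightarrow> frame_level n F x m = frame_level n F y m"
  unfolding frame_level_def frame_fibre_def by (intro arg_cong[where f = "\<lambda>t. t / _"] sum.cong) auto

lemma frame_bary_cong:
  "(\<And>k. k \<in> {1..n} \<Longrightarrow> x k = y k) \<Longrightarrow> frame_bary n F x i = frame_bary n F y i"
  unfolding frame_bary_def using frame_level_cong[of n x y] by simp

lemma frame_map_cong:
  "(\<And>k. k \<in> {1..n} \<Longrightarrow> x k = y k) \<Longrightarrow> frame_map n F v x = frame_map n F v y"
  unfolding frame_map_def using frame_bary_cong[of n x y] by simp

lemma frame_level_affine:
  assumes "finite J" and a: "(\<Sum>j\<in>J. a j) = 1" and x: "\<And>k. k \<in> {1..n} \<Longrightarrow> x k = (\<Sum>j\<in>J. a j * p j k)"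
  shows "frame_level n F x m = (\<Sum>j\<in>J. a j * frame_level n F (p j) m)"
proof -
  let ?d = "\<lambda>y k. fr_sign F k * (y k - fr_origin F k)"
  have "?d x k = (\<Sum>j\<in>J. a j * ?d (p j) k)" if "k \<in> frame_fibre n F m" for k
  proof -
    have "(\<Sum>j\<in>J. a j * (p j k - fr_origin F k)) = (\<Sum>j\<in>J. a j * p j k) - (\<Sum>j\<in>J. a j) * fr_origin F k"
      by (simp add: right_diff_distrib sum_subtractf sum_distrib_right)
    also have "\<dots> = x k - fr_origin F k"
      using that x[of k] a by (simp add: frame_fibre_def)
    finally have "(\<Sum>j\<in>J. a j * (p j k - fr_origin F k)) = x k - fr_origin F k" .
    moreover have "(\<Sum>j\<in>J. a j * ?d (p j) k) = fr_sign F k * (\<Sum>j\<in>J. a j * (p j k - fr_origin F k))"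
      by (simp add: sum_distrib_left mult.left_commute)
    ultimately show ?thesis by simp
  qed
  then have "(\<Sum>k\<in>frame_fibre n F m. ?d x k) = (\<Sum>k\<in>frame_fibre n F m. \<Sum>j\<in>J. a j * ?d (p j) k)"
    by (rule sum.cong[OF refl])
  also have "\<dots> = (\<Sum>j\<in>J. a j * (\<Sum>k\<in>frame_fibre n F m. ?d (p j) k))"
    by (subst sum.swap) (simp add: sum_distrib_left)
  finally show ?thesis by (simp add: frame_level_def flip: sum_divide_distrib)
qed

lemma frame_bary_affine:
  assumes "finite J" and a: "(\<Sum>j\<in>J. a j) = 1" and "\<And>k. k \<in> {1..n} \<Longrightarrow> x k = (\<Sum>j\<in>J. a j * p j k)"
  shows "frame_bary n F x i = (\<Sum>j\<in>J. a j * frame_bary n F (p j) i)"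
proof -
  have level: "frame_level n F x m = (\<Sum>j\<in>J. a j * frame_level n F (p j) m)" for m
    by (rule frame_level_affine[OF assms])
  define D where "D y i = (frame_level n F y i - frame_level n F y (Suc i)) / tag_scale (fr_tag F) i" for y i
  have D: "D x i = (\<Sum>j\<in>J. a j * D (p j) i)" for i
    unfolding D_def level
    by (simp add: right_diff_distrib sum_subtractf flip: sum_divide_distrib)
  show ?thesis
  proof (cases "i = 0")
    case True
    have "(\<Sum>i=1..n. D x i) = (\<Sum>j\<in>J. a j * (\<Sum>i=1..n. D (p j) i))"
      unfolding D sum_distrib_left by (rule sum.swap)
    then show ?thesis
      using True a by (simp add: frame_bary_def D_def[symmetric] right_diff_distrib sum_subtractf)
  qed (simp add: frame_bary_def D_def[symmetric] D)
qed

lemma frame_map_affine: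
  assumes "finite J" and "(\<Sum>j\<in>J. a j) = 1" and "\<And>k. k \<in> {1..n} \<Longrightarrow> x k = (\<Sum>j\<in>J. a j * p j k)"
  shows "frame_map n F v x = (\<Sum>j\<in>J. a j *\<^sub>R frame_map n F v (p j))"
proof -
  have bary: "frame_bary n F x i = (\<Sum>j\<in>J. a j * frame_bary n F (p j) i)" for i
    by (rule frame_bary_affine[OF assms])
  have "frame_map n F v x = (\<Sum>i\<le>n. \<Sum>j\<in>J. (a j * frame_bary n F (p j) i) *\<^sub>R v i)"
    unfolding frame_map_def bary by (simp only: scaleR_sum_left)
  also have "\<dots> = (\<Sum>j\<in>J. \<Sum>i\<le>n. (a j * frame_bary n F (p j) i) *\<^sub>R v i)"
    by (rule sum.swap)
  also have "\<dots> = (\<Sum>j\<in>J. a j *\<^sub>R frame_map n F v (p j))"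
    by (simp add: frame_map_def scaleR_sum_right)
  finally show ?thesis .
qed

lemma frame_map_midpoint:
  assumes "\<And>k. k \<in> {1..n} \<Longrightarrow> x k = (1/2) * p k + (1/2) * q k"
  shows "frame_map n F v x = (1/2) *\<^sub>R (frame_map n F v p + frame_map n F v q)"
proof -
  have "frame_map n F v x = (\<Sum>j\<in>{0::nat, 1}. (1/2) *\<^sub>R frame_map n F v (if j = 0 then p else q))"
    by (rule frame_map_affine) (auto simp: assms)
  then show ?thesis by (simp add: scaleR_right_distrib)
qed

lemma frame_level_origin: "frame_level n F (fr_origin F) m = 0"
  by (simp add: frame_level_def)

lemma frame_rank_surj: "is_frame n F \<Longrightarrow> fr_rank F ` {1..n} = {1..n}"
  by (intro endo_inj_surj) (auto simp: is_frame_def)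

lemma frame_fibre_rank:
  "is_frame n F \<Longrightarrow> k \<in> {1..n} \<Longrightarrow> frame_fibre n F (fr_rank F k) = {k}"
  unfolding frame_fibre_def is_frame_def inj_on_def by blast

definition frame_shift :: "nat \<Rightarrow> frame \<Rightarrow> frame \<Rightarrow> nat \<Rightarrow> nat \<Rightarrow> real" where
  "frame_shift n G F j i = (\<Sum>k\<in>frame_fibre n G i.
     fr_sign G k * fr_sign F k * (if fr_rank F k \<le> j then tag_scale (fr_tag F) j else 0))"

lemma frame_level_frame_vertex:
  "frame_level n G (frame_vertex F j) i
    = frame_level n G (fr_origin F) i + fr_len F / fr_len G * frame_shift n G F j i"
proof -
  have "fr_sign G k * (frame_vertex F j k - fr_origin G k)
      = fr_sign G k * (fr_origin F k - fr_origin G k)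
        + fr_len F * (fr_sign G k * fr_sign F k * (if fr_rank F k \<le> j then tag_scale (fr_tag F) j else 0))"
    for k by (simp add: frame_vertex_def algebra_simps)
  then have "(\<Sum>k\<in>frame_fibre n G i. fr_sign G k * (frame_vertex F j k - fr_origin G k))
      = (\<Sum>k\<in>frame_fibre n G i. fr_sign G k * (fr_origin F k - fr_origin G k))
        + fr_len F * frame_shift n G F j i"
    by (simp add: frame_shift_def sum.distrib sum_distrib_left)
  then show ?thesis by (simp add: frame_level_def add_divide_distrib)
qed

lemma frame_bary_frame_vertex:
  assumes F: "is_frame n F" and "i \<le> n" and "j \<le> n"
  shows "frame_bary n F (frame_vertex F j) i = (if i = j then 1 else 0)"
proof -
  have level: "frame_level n F (frame_vertex F j) m = (if m \<le> j then tag_scale (fr_tag F) j else 0)"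
    if "m \<in> {1..Suc n}" for m
  proof (cases "m = Suc n")
    case True
    then show ?thesis
      using \<open>j \<le> n\<close>
      by (simp add: frame_level_frame_vertex frame_shift_def frame_fibre_Suc_empty[OF F] frame_level_origin)
  next
    case False
    then have "m \<in> fr_rank F ` {1..n}" using that frame_rank_surj[OF F] by auto
    then obtain k where k: "k \<in> {1..n}" "m = fr_rank F k" by blast
    have "fr_sign F k * fr_sign F k = 1" using is_frameD(4)[OF F, of k] by auto
    then show ?thesis using is_frameD(1)[OF F]
      by (simp add: frame_level_frame_vertex frame_shift_def frame_fibre_rank[OF F k(1)] k(2)
          frame_level_origin)
  qed
  have pos: "frame_bary n F (frame_vertex F j) i = (if i = j then 1 else 0)" if "i \<in> {1..n}" for i
    using that level[of i] level[of "Suc i"] tag_scale_pos[of "fr_tag F" i]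
    by (auto simp: frame_bary_def)
  show ?thesis
  proof (cases "i = 0")
    case True
    have "(\<Sum>i=1..n. frame_bary n F (frame_vertex F j) i) = (\<Sum>i=1..n. if i = j then 1 else 0)"
      using pos by (intro sum.cong) auto
    also have "\<dots> = (if j = 0 then 0 else 1)" using \<open>j \<le> n\<close> by simp
    finally show ?thesis using True frame_bary_sum[of n F "frame_vertex F j"]
      by (cases "j = 0") (simp_all add: atMost_atLeast0 sum.atLeast_Suc_atMost)
  qed (use pos \<open>i \<le> n\<close> in auto)
qed

lemma frame_map_frame_vertex:
  assumes "is_frame n F" and "j \<le> n"
  shows "frame_map n F v (frame_vertex F j) = v j"
proof -
  have "frame_map n F v (frame_vertex F j) = (\<Sum>i\<le>n. if i = j then v i else 0)"
    unfolding frame_map_def using assms by (intro sum.cong) (auto simp: frame_bary_frame_vertex)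
  then show ?thesis using assms(2) by simp
qed

lemma frame_vertex_bary:
  assumes F: "is_frame n F" and k: "k \<in> {1..n}"
  shows "(\<Sum>j\<le>n. frame_bary n F x j * frame_vertex F j k) = x k"
proof -
  let ?b = "frame_bary n F x" and ?L = "frame_level n F x" and ?c = "tag_scale (fr_tag F)"
  have t: "fr_rank F k \<in> {1..n}" using is_frameD(3)[OF F k] .
  have "(\<Sum>j\<le>n. ?b j * frame_vertex F j k)
      = fr_origin F k * (\<Sum>j\<le>n. ?b j)
        + fr_len F * fr_sign F k * (\<Sum>j\<le>n. if fr_rank F k \<le> j then ?b j * ?c j else 0)"
  proof -
    have "?b j * frame_vertex F j k = fr_origin F k * ?b j
        + fr_len F * fr_sign F k * (if fr_rank F k \<le> j then ?b j * ?c j else 0)" for j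
      by (simp add: frame_vertex_def algebra_simps)
    then show ?thesis by (simp add: sum.distrib sum_distrib_left)
  qed
  also have "(\<Sum>j\<le>n. if fr_rank F k \<le> j then ?b j * ?c j else 0) = (\<Sum>j=fr_rank F k..n. ?L j - ?L (Suc j))"
  proof -
    have "{j\<in>{..n}. fr_rank F k \<le> j} = {fr_rank F k..n}" by auto
    moreover have "?b j * ?c j = ?L j - ?L (Suc j)" if "j \<in> {fr_rank F k..n}" for j
      using that t tag_scale_pos[of "fr_tag F" j] by (simp add: frame_bary_def)
    ultimately show ?thesis by (simp add: sum.inter_filter[symmetric])
  qed
  also have "\<dots> = ?L (fr_rank F k) - ?L (Suc n)"
    using t by (intro sum_telescope_atLeastAtMost) auto
  also have "\<dots> = fr_sign F k * (x k - fr_origin F k) / fr_len F"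
    by (simp add: frame_level_def frame_fibre_rank[OF F k] frame_fibre_Suc_empty[OF F])
  finally show ?thesis
    using is_frameD(1)[OF F] is_frameD(4)[OF F, of k] by (auto simp: frame_bary_sum field_simps)
qed

section \<open>Maubach bisection in frame coordinates\<close>

definition left_frame :: "nat \<Rightarrow> frame \<Rightarrow> frame" where
  "left_frame n F = F\<lparr>fr_len := (if fr_tag F = 1 then fr_len F / 2 else fr_len F),
     fr_tag := new_tag n (fr_tag F)\<rparr>"

text \<open>The right child starts at vertex 1 of its parent: the coordinate of rank 1 is walked
  backwards, and last before the new midpoint.\<close>

definition right_frame :: "nat \<Rightarrow> frame \<Rightarrow> frame" where
  "right_frame n F = \<lparr>
     fr_origin = \<lambda>k. fr_origin F k + (if fr_rank F k = 1 then fr_len F * fr_sign F k else 0),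
     fr_len = (if fr_tag F = 1 then fr_len F / 2 else fr_len F),
     fr_rank = \<lambda>k. if fr_rank F k = 1 then fr_tag F
                   else if fr_rank F k \<le> fr_tag F then fr_rank F k - 1 else fr_rank F k,
     fr_sign = \<lambda>k. if fr_rank F k = 1 then - fr_sign F k else fr_sign F k,
     fr_tag = new_tag n (fr_tag F)\<rparr>"

lemma is_frame_left_frame: "is_frame n F \<Longrightarrow> is_frame n (left_frame n F)"
  by (auto simp: is_frame_def left_frame_def new_tag_def)

lemma is_frame_right_frame:
  assumes F: "is_frame n F"
  shows "is_frame n (right_frame n F)"
proof -
  let ?\<tau> = "fr_rank F" and ?g = "fr_tag F"
  have \<tau>: "?\<tau> k \<in> {1..n}" if "k \<in> {1..n}" for k using is_frameD(3)[OF F that] .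
  have "inj_on (fr_rank (right_frame n F)) {1..n}"
  proof (rule inj_onI)
    fix x y assume x: "x \<in> {1..n}" and y: "y \<in> {1..n}"
      and eq: "fr_rank (right_frame n F) x = fr_rank (right_frame n F) y"
    have "?\<tau> x = ?\<tau> y"
      using eq \<tau>[OF x] \<tau>[OF y] is_frameD(5,6)[OF F]
      by (auto simp: right_frame_def split: if_splits)
    then show "x = y" using is_frameD(2)[OF F] x y by (meson inj_onD)
  qed
  moreover have "fr_rank (right_frame n F) ` {1..n} \<subseteq> {1..n}"
    using \<tau> is_frameD(5,6)[OF F] by (fastforce simp: right_frame_def)
  ultimately show ?thesis
    using F by (auto simp: is_frame_def right_frame_def new_tag_def)
qed

lemma tag_scale_new_tag:
  assumes "g \<in> {1..n}" and "1 \<le> j" and "j \<le> n"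
  shows "(if g = 1 then h / 2 else h) * tag_scale (new_tag n g) j
    = (if j = g then h / 2 else h * tag_scale g j)"
  using assms by (auto simp: tag_scale_def new_tag_def)

lemma frame_vertex_left_frame:
  assumes F: "is_frame n F" and k: "k \<in> {1..n}" and j: "j \<le> n"
  shows "frame_vertex (left_frame n F) j k =
    (if j = fr_tag F then (1/2) * frame_vertex F 0 k + (1/2) * frame_vertex F j k
     else frame_vertex F j k)"
proof -
  let ?o = "fr_origin F k" and ?h = "fr_len F" and ?t = "fr_rank F k" and ?e = "fr_sign F k"
    and ?g = "fr_tag F" and ?c = "tag_scale (fr_tag F)"
  have t: "1 \<le> ?t" and g: "?g \<in> {1..n}" using is_frameD(3,5,6)[OF F] k by auto
  have new: "frame_vertex (left_frame n F) j k
      = ?o + (if ?t \<le> j then (if j = ?g then ?h / 2 else ?h * ?c j) * ?e else 0)"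
  proof (cases "?t \<le> j")
    case True
    then have "1 \<le> j" using t by linarith
    with True show ?thesis
      using tag_scale_new_tag[OF g \<open>1 \<le> j\<close> j, of ?h] by (simp add: frame_vertex_def left_frame_def)
  qed (simp add: frame_vertex_def left_frame_def)
  have old: "frame_vertex F i k = ?o + (if ?t \<le> i then ?h * ?c i * ?e else 0)" for i
    by (simp add: frame_vertex_def)
  show ?thesis
    unfolding new old using t by (cases "j = ?g") (simp_all add: tag_scale_def field_simps)
qed

lemma frame_vertex_right_frame:
  assumes F: "is_frame n F" and k: "k \<in> {1..n}" and j: "j \<le> n"
  shows "frame_vertex (right_frame n F) j k =
    (if j < fr_tag F then frame_vertex F (Suc j) k
     else if j = fr_tag F then (1/2) * frame_vertex F 0 k + (1/2) * frame_vertex F j k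
     else frame_vertex F j k)"
proof -
  let ?o = "fr_origin F k" and ?h = "fr_len F" and ?t = "fr_rank F k" and ?e = "fr_sign F k"
    and ?g = "fr_tag F" and ?c = "tag_scale (fr_tag F)" and ?t' = "fr_rank (right_frame n F) k"
  have t: "1 \<le> ?t" and g: "?g \<in> {1..n}" using is_frameD(3,5,6)[OF F] k by auto
  have t': "1 \<le> ?t'" using t g by (auto simp: right_frame_def)
  have rank: "?t' \<le> j \<longleftrightarrow> (if j < ?g then ?t \<noteq> 1 \<and> ?t \<le> Suc j else ?t \<le> j)"
    using t g by (auto simp: right_frame_def)
  have new: "frame_vertex (right_frame n F) j k = ?o + (if ?t = 1 then ?h * ?e else 0)
      + (if ?t' \<le> j then (if j = ?g then ?h / 2 else ?h * ?c j) * (if ?t = 1 then - ?e else ?e) else 0)"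
  proof (cases "?t' \<le> j")
    case True
    then have "1 \<le> j" using t' by linarith
    with True show ?thesis
      using tag_scale_new_tag[OF g \<open>1 \<le> j\<close> j, of ?h] by (simp add: frame_vertex_def right_frame_def)
  qed (simp add: frame_vertex_def right_frame_def)
  have old: "frame_vertex F i k = ?o + (if ?t \<le> i then ?h * ?c i * ?e else 0)" for i
    by (simp add: frame_vertex_def)
  consider "j < ?g" | "j = ?g" | "?g < j" by linarith
  then show ?thesis
  proof cases
    case 1
    then show ?thesis
      unfolding new old rank by (cases "?t = 1") (simp_all add: tag_scale_def)
  next
    case 2
    then show ?thesis
      unfolding new old rank using t g by (cases "?t = 1") (simp_all add: tag_scale_def field_simps)
  next
    case 3
    then show ?thesis
      unfolding new old rank using t by (cases "?t = 1") (simp_all add: tag_scale_def field_simps)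
  qed
qed

lemma bisect_left_frame_map:
  assumes F: "is_frame n F" and T: "snd T = fr_tag F"
    "\<And>j. j \<le> n \<Longrightarrow> fst T j = frame_map n G v (frame_vertex F j)"
  shows "j \<le> n \<Longrightarrow> fst (bisect_left n T) j = frame_map n G v (frame_vertex (left_frame n F) j)"
  using T is_frameD(6)[OF F]
  by (auto simp: bisect_left_def Let_def frame_vertex_left_frame[OF F]
      intro: frame_map_cong frame_map_midpoint[symmetric])

lemma bisect_right_frame_map:
  assumes F: "is_frame n F" and T: "snd T = fr_tag F"
    "\<And>j. j \<le> n \<Longrightarrow> fst T j = frame_map n G v (frame_vertex F j)"
  shows "j \<le> n \<Longrightarrow> fst (bisect_right n T) j = frame_map n G v (frame_vertex (right_frame n F) j)"
  using T is_frameD(6)[OF F]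
  by (auto simp: bisect_right_def Let_def frame_vertex_right_frame[OF F]
      intro: frame_map_cong frame_map_midpoint[symmetric])

lemma maubach_desc_frame:
  assumes "snd T0 \<in> {1..n}" and "T \<in> maubach_desc n T0"
  obtains F where "is_frame n F" and "fr_tag F = snd T"
    and "\<And>j. j \<le> n \<Longrightarrow> fst T j = frame_map n (ref_frame (snd T0)) (fst T0) (frame_vertex F j)"
proof -
  let ?\<Phi> = "frame_map n (ref_frame (snd T0)) (fst T0)"
  from assms(2) have "\<exists>F. is_frame n F \<and> fr_tag F = snd T \<and> (\<forall>j\<le>n. fst T j = ?\<Phi> (frame_vertex F j))"
  proof induction
    case base
    let ?R = "ref_frame (snd T0)"
    have R: "is_frame n ?R" by (rule is_frame_ref_frame[OF assms(1)])
    moreover have "fr_tag ?R = snd T0" by (simp add: ref_frame_def)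
    moreover have "\<forall>j\<le>n. fst T0 j = ?\<Phi> (frame_vertex ?R j)"
      by (intro allI impI) (rule frame_map_frame_vertex[OF R, symmetric])
    ultimately show ?case by blast
  next
    case (left T)
    then obtain F where F: "is_frame n F" "snd T = fr_tag F"
      "\<And>j. j \<le> n \<Longrightarrow> fst T j = ?\<Phi> (frame_vertex F j)" by auto
    have "fr_tag (left_frame n F) = snd (bisect_left n T)"
      using F(2) by (simp add: left_frame_def bisect_left_def Let_def)
    then show ?case
      using is_frame_left_frame[OF F(1)] bisect_left_frame_map[OF F] by blast
  next
    case (right T)
    then obtain F where F: "is_frame n F" "snd T = fr_tag F"
      "\<And>j. j \<le> n \<Longrightarrow> fst T j = ?\<Phi> (frame_vertex F j)" by auto
    have "fr_tag (right_frame n F) = snd (bisect_right n T)"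
      using F(2) by (simp add: right_frame_def bisect_right_def Let_def)
    then show ?case
      using is_frame_right_frame[OF F(1)] bisect_right_frame_map[OF F] by blast
  qed
  then show thesis using that by blast
qed

section \<open>Comparing two frame simplices\<close>

lemma sum_shift_le:
  fixes b c :: "nat \<Rightarrow> real"
  assumes b: "\<And>i. 0 \<le> b i" and "b (Suc n) = 0"
    and c: "\<And>i. 0 < c i" and c_anti: "\<And>i. c (Suc i) \<le> c i"
  shows "(\<Sum>i=1..n. b (Suc i) / c i) \<le> (\<Sum>i=1..n. b i / c i)"
proof -
  have "(\<Sum>i=1..n. b (Suc i) / c i) \<le> (\<Sum>i=1..n. b (Suc i) / c (Suc i))"
    by (rule sum_mono) (simp add: b c c_anti frac_le)
  also have "\<dots> = (\<Sum>i=Suc 1..Suc n. b i / c i)"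
    by (rule sum.shift_bounds_cl_Suc_ivl[symmetric])
  also have "\<dots> \<le> (\<Sum>i=1..Suc n. b i / c i)"
    by (rule sum_mono2) (auto intro!: divide_nonneg_pos b c)
  also have "\<dots> = (\<Sum>i=1..n. b i / c i)" using \<open>b (Suc n) = 0\<close> by simp
  finally show ?thesis .
qed

lemma sum_by_frame_fibres:
  assumes "is_frame n G"
  shows "(\<Sum>k=1..n. f k) = (\<Sum>i=1..n. \<Sum>k\<in>frame_fibre n G i. f k)"
  unfolding frame_fibre_def
  by (rule sum.group[symmetric]) (use is_frameD(3)[OF assms] in auto)

definition frame_ratio :: "nat \<Rightarrow> frame \<Rightarrow> frame \<Rightarrow> real" where
  "frame_ratio n F G =
     (\<Sum>k=1..n. tag_scale (fr_tag F) (fr_rank F k) / tag_scale (fr_tag G) (fr_rank G k))"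

lemma frame_ratio_pos: "1 \<le> n \<Longrightarrow> 0 < frame_ratio n F G"
  unfolding frame_ratio_def by (intro sum_pos divide_pos_pos tag_scale_pos) auto

lemma frame_ratio_mult_le: "frame_ratio n F G * frame_ratio n G F \<le> (5/4 * real n)\<^sup>2"
proof -
  define A where "A = frame_ratio n F G"
  define B where "B = frame_ratio n G F"
  have "A + B = (\<Sum>k=1..n. tag_scale (fr_tag F) (fr_rank F k) / tag_scale (fr_tag G) (fr_rank G k)
      + tag_scale (fr_tag G) (fr_rank G k) / tag_scale (fr_tag F) (fr_rank F k))"
    by (simp add: A_def B_def frame_ratio_def sum.distrib)
  \<comment> \<open>each ratio is \<open>1/2\<close>, \<open>1\<close> or \<open>2\<close>, so each summand is at most \<open>2 + 1/2\<close>\<close>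
  also have "\<dots> \<le> (\<Sum>k=1..n. 5/2)"
    by (intro sum_mono) (simp add: tag_scale_def)
  finally have "A + B \<le> 5/2 * real n" by simp
  moreover have "0 \<le> A" "0 \<le> B"
    unfolding A_def B_def frame_ratio_def
    by (auto intro!: sum_nonneg divide_nonneg_pos tag_scale_pos simp: less_imp_le[OF tag_scale_pos])
  moreover have "4 * (A * B) \<le> (A + B)\<^sup>2"
    using zero_le_power2[of "A - B"] by (simp add: power2_eq_square algebra_simps)
  moreover have "(5/2 * real n)\<^sup>2 = 4 * (5/4 * real n)\<^sup>2" by (simp add: power2_eq_square)
  ultimately show ?thesis
    using power_mono[of "A + B" "5/2 * real n" 2] by (simp add: A_def B_def)
qed

definition frame_shift_pos :: "nat \<Rightarrow> frame \<Rightarrow> frame \<Rightarrow> nat \<Rightarrow> real" where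
  "frame_shift_pos n G F i = (\<Sum>k\<in>frame_fibre n G i.
     if 0 < fr_sign G k * fr_sign F k then tag_scale (fr_tag F) (fr_rank F k) else 0)"

definition frame_shift_neg :: "nat \<Rightarrow> frame \<Rightarrow> frame \<Rightarrow> nat \<Rightarrow> real" where
  "frame_shift_neg n G F i = (\<Sum>k\<in>frame_fibre n G i.
     if fr_sign G k * fr_sign F k < 0 then tag_scale (fr_tag F) (fr_rank F k) else 0)"

lemma frame_sign_mult:
  "is_frame n G \<Longrightarrow> is_frame n F \<Longrightarrow> fr_sign G k * fr_sign F k = 1 \<or> fr_sign G k * fr_sign F k = -1"
  using is_frameD(4)[of n G k] is_frameD(4)[of n F k] by auto

lemma frame_shift_bounds:
  assumes G: "is_frame n G" and F: "is_frame n F"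
  shows "- frame_shift_neg n G F i \<le> frame_shift n G F j i"
    and "frame_shift n G F j i \<le> frame_shift_pos n G F i"
proof -
  let ?s = "\<lambda>k. fr_sign G k * fr_sign F k"
    and ?t = "\<lambda>k. if fr_rank F k \<le> j then tag_scale (fr_tag F) j else 0"
    and ?w = "\<lambda>k. tag_scale (fr_tag F) (fr_rank F k)"
  have "0 \<le> ?t k" "?t k \<le> ?w k" for k
    using tag_scale_pos tag_scale_antimono by (auto simp: less_imp_le)
  then have "- (if ?s k < 0 then ?w k else 0) \<le> ?s k * ?t k" "?s k * ?t k \<le> (if 0 < ?s k then ?w k else 0)" for k
    using frame_sign_mult[OF G F, of k] by (cases "?s k = 1"; simp)+
  then show "- frame_shift_neg n G F i \<le> frame_shift n G F j i" "frame_shift n G F j i \<le> frame_shift_pos n G F i"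
    unfolding frame_shift_neg_def frame_shift_pos_def frame_shift_def sum_negf[symmetric]
    by (auto intro: sum_mono)
qed

lemma frame_shift_Suc_eq_0:
  assumes "is_frame n G"
  shows "frame_shift n G F j (Suc n) = 0" and "frame_shift_pos n G F (Suc n) = 0"
    and "frame_shift_neg n G F (Suc n) = 0"
  by (simp_all add: frame_shift_def frame_shift_pos_def frame_shift_neg_def frame_fibre_Suc_empty[OF assms])

lemma frame_ratio_by_shifts:
  assumes G: "is_frame n G" and F: "is_frame n F"
  shows "frame_ratio n F G
    = (\<Sum>i=1..n. (frame_shift_neg n G F i + frame_shift_pos n G F i) / tag_scale (fr_tag G) i)"
proof -
  let ?s = "\<lambda>k. fr_sign G k * fr_sign F k" and ?w = "\<lambda>k. tag_scale (fr_tag F) (fr_rank F k)"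
  have "frame_ratio n F G = (\<Sum>i=1..n. \<Sum>k\<in>frame_fibre n G i. ?w k / tag_scale (fr_tag G) (fr_rank G k))"
    unfolding frame_ratio_def by (rule sum_by_frame_fibres[OF G])
  also have "\<dots> = (\<Sum>i=1..n. \<Sum>k\<in>frame_fibre n G i.
      ((if ?s k < 0 then ?w k else 0) + (if 0 < ?s k then ?w k else 0)) / tag_scale (fr_tag G) i)"
  proof (intro sum.cong refl)
    fix i k assume "k \<in> frame_fibre n G i"
    then show "?w k / tag_scale (fr_tag G) (fr_rank G k)
        = ((if ?s k < 0 then ?w k else 0) + (if 0 < ?s k then ?w k else 0)) / tag_scale (fr_tag G) i"
      using frame_sign_mult[OF G F, of k] by (auto simp: frame_fibre_def)
  qed
  finally show ?thesis
    by (simp add: frame_shift_neg_def frame_shift_pos_def sum.distrib flip: sum_divide_distrib)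
qed

lemma frame_bary_frame_vertex_shift:
  "i \<noteq> 0 \<Longrightarrow> frame_bary n G (frame_vertex F j) i = frame_bary n G (fr_origin F) i
    + fr_len F / fr_len G * (frame_shift n G F j i - frame_shift n G F j (Suc i)) / tag_scale (fr_tag G) i"
  by (simp add: frame_bary_def frame_level_frame_vertex diff_divide_distrib add_divide_distrib
      right_diff_distrib)

lemma frame_bary_lower_bound:
  assumes G: "is_frame n G" and F: "is_frame n F"
  obtains m where "\<And>i j. i \<le> n \<Longrightarrow> j \<le> n \<Longrightarrow> m i \<le> frame_bary n G (frame_vertex F j) i"
    and "(\<Sum>i\<le>n. m i) = 1 - fr_len F / fr_len G * frame_ratio n F G"
proof -
  define \<rho> where "\<rho> = fr_len F / fr_len G"
  define c where "c = tag_scale (fr_tag G)"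
  define b where "b x i = frame_bary n G x i" for x i
  define U where "U = frame_shift n G F"
  define N where "N = frame_shift_neg n G F"
  define P where "P = frame_shift_pos n G F"
  define m' where "m' i = b (fr_origin F) i + \<rho> * (- (N i + P (Suc i))) / c i" for i
  have \<rho>: "0 \<le> \<rho>" using is_frameD(1)[OF G] is_frameD(1)[OF F] by (simp add: \<rho>_def)
  have c: "0 < c i" "c (Suc i) \<le> c i" for i by (simp_all add: c_def tag_scale_pos tag_scale_antimono)
  note U_bounds = frame_shift_bounds[OF G F, folded U_def N_def P_def]
  note b_vertex = frame_bary_frame_vertex_shift[of _ n G F, folded b_def U_def \<rho>_def c_def]
  have m'_le: "m' i \<le> b (frame_vertex F j) i" if "i \<noteq> 0" for i j
  proof -
    have "- (N i + P (Suc i)) \<le> U j i - U j (Suc i)"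
      using U_bounds(1)[of i j] U_bounds(2)[of j "Suc i"] by linarith
    then have "\<rho> * (- (N i + P (Suc i))) / c i \<le> \<rho> * (U j i - U j (Suc i)) / c i"
      using \<rho> c(1)[of i] by (intro divide_right_mono mult_left_mono) auto
    then show ?thesis by (simp add: b_vertex[OF that] m'_def)
  qed
  \<comment> \<open>the excess over \<open>m'\<close> telescopes to at most \<open>\<rho>\<close> times \<open>frame_ratio n F G\<close>, because the
    weights \<open>1 / c i\<close> increase with \<open>i\<close>\<close>
  have excess_le: "(\<Sum>i=1..n. b (frame_vertex F j) i - m' i) \<le> \<rho> * frame_ratio n F G" for j
  proof -
    define p where "p i = U j i + N i" for i
    define q where "q i = P i - U j i" for i
    have "b (frame_vertex F j) i - m' i = \<rho> * (p i / c i + q (Suc i) / c i)" if "i \<in> {1..n}" for i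
      using that c(1)[of i] by (simp add: b_vertex m'_def p_def q_def field_simps)
    then have "(\<Sum>i=1..n. b (frame_vertex F j) i - m' i)
        = \<rho> * ((\<Sum>i=1..n. p i / c i) + (\<Sum>i=1..n. q (Suc i) / c i))"
      by (simp add: sum.distrib flip: sum_distrib_left)
    also have "\<dots> \<le> \<rho> * ((\<Sum>i=1..n. p i / c i) + (\<Sum>i=1..n. q i / c i))"
      using sum_shift_le[of q n c] U_bounds frame_shift_Suc_eq_0[OF G] c \<rho>
      by (intro mult_left_mono) (auto simp: q_def U_def P_def)
    also have "\<dots> = \<rho> * frame_ratio n F G"
      by (simp add: frame_ratio_by_shifts[OF G F] p_def q_def N_def P_def c_def
          sum.distrib[symmetric] add_divide_distrib[symmetric])
    finally show ?thesis .
  qed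
  define m where "m i = (if i = 0 then 1 - (\<Sum>i=1..n. m' i) - \<rho> * frame_ratio n F G else m' i)" for i
  show thesis
  proof (rule that)
    fix i j assume "i \<le> n" "j \<le> n"
    show "m i \<le> frame_bary n G (frame_vertex F j) i"
    proof (cases "i = 0")
      case True
      have "b (frame_vertex F j) 0 = 1 - (\<Sum>i=1..n. b (frame_vertex F j) i)"
        using frame_bary_sum[of n G "frame_vertex F j"]
        by (simp add: b_def atMost_atLeast0 sum.atLeast_Suc_atMost)
      then show ?thesis using True excess_le[of j] by (simp add: m_def b_def sum_subtractf)
    qed (use m'_le in \<open>simp add: m_def b_def\<close>)
  next
    show "(\<Sum>i\<le>n. m i) = 1 - fr_len F / fr_len G * frame_ratio n F G"
      by (simp add: m_def atMost_atLeast0 sum.atLeast_Suc_atMost \<rho>_def)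
  qed
qed

lemma simplex_set_frame_homothetic:
  fixes P Q :: "nat \<Rightarrow> 'a::euclidean_space"
  assumes G: "is_frame n G" and F: "is_frame n F"
    and Q: "\<And>j. j \<le> n \<Longrightarrow> Q j = frame_map n G P (frame_vertex F j)"
  obtains p where "simplex_set n Q
    \<subseteq> (\<lambda>x. p + (fr_len F / fr_len G * frame_ratio n F G) *\<^sub>R x) ` simplex_set n P"
proof -
  obtain m where m: "\<And>i j. i \<le> n \<Longrightarrow> j \<le> n \<Longrightarrow> m i \<le> frame_bary n G (frame_vertex F j) i"
    and sum_m: "(\<Sum>i\<le>n. m i) = 1 - fr_len F / fr_len G * frame_ratio n F G"
    using frame_bary_lower_bound[OF G F] by blast
  have "0 < fr_len F / fr_len G * frame_ratio n F G"
    using is_frameD(1)[OF G] is_frameD(1)[OF F] is_frameD(5,6)[OF F] frame_ratio_pos by simp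
  moreover have "\<exists>a. (\<forall>i\<in>{..n}. m i \<le> a i) \<and> sum a {..n} = 1 \<and> Q j = (\<Sum>i\<in>{..n}. a i *\<^sub>R P i)"
    if "j \<in> {..n}" for j
    using that m frame_bary_sum Q
    by (intro exI[of _ "frame_bary n G (frame_vertex F j)"]) (simp add: frame_map_def)
  ultimately have "simplex_set n Q
      \<subseteq> (\<lambda>x. (\<Sum>i\<in>{..n}. m i *\<^sub>R P i) + (fr_len F / fr_len G * frame_ratio n F G) *\<^sub>R x) ` simplex_set n P"
    unfolding simplex_set_def using sum_m by (intro convex_hull_subset_homothetic) auto
  then show thesis by (rule that)
qed

theorem shape_reg_maubach_desc_le:
  fixes T0 :: "'a::euclidean_space tsimplex"
  assumes n: "n = DIM('a)" and T0: "is_tagged_nsimplex n T0" and T: "T \<in> maubach_desc n T0"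
  shows "shape_reg (simplex_set n (fst T)) \<le> (5/4 * real n)\<^sup>2 * shape_reg (simplex_set n (fst T0))"
proof -
  let ?R = "ref_frame (snd T0)" and ?v = "fst T0"
  have g0: "snd T0 \<in> {1..n}" and v: "is_nsimplex n ?v" using T0 by (auto simp: is_tagged_nsimplex_def)
  have R: "is_frame n ?R" by (rule is_frame_ref_frame[OF g0])
  obtain F where F: "is_frame n F" and vertex_T: "\<And>j. j \<le> n \<Longrightarrow> fst T j = frame_map n ?R ?v (frame_vertex F j)"
    using maubach_desc_frame[OF g0 T] by blast
  obtain p where up: "simplex_set n (fst T)
      \<subseteq> (\<lambda>x. p + (fr_len F * frame_ratio n F ?R) *\<^sub>R x) ` simplex_set n ?v"
    using simplex_set_frame_homothetic[OF R F vertex_T] by (auto simp: ref_frame_def)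
  have vertex_T0: "?v i = frame_map n F (fst T) (frame_vertex ?R i)" if "i \<le> n" for i
  proof -
    let ?b = "frame_bary n F (frame_vertex ?R i)"
    have "?v i = frame_map n ?R ?v (frame_vertex ?R i)"
      by (rule frame_map_frame_vertex[OF R that, symmetric])
    also have "\<dots> = frame_map n ?R ?v (\<lambda>k. \<Sum>j\<le>n. ?b j * frame_vertex F j k)"
      by (rule frame_map_cong) (simp add: frame_vertex_bary[OF F])
    also have "\<dots> = (\<Sum>j\<le>n. ?b j *\<^sub>R frame_map n ?R ?v (frame_vertex F j))"
      by (rule frame_map_affine) (auto simp: frame_bary_sum)
    also have "\<dots> = frame_map n F (fst T) (frame_vertex ?R i)"
      by (simp add: frame_map_def vertex_T)
    finally show ?thesis .
  qed
  obtain q where down: "simplex_set n ?v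
      \<subseteq> (\<lambda>x. q + (frame_ratio n ?R F / fr_len F) *\<^sub>R x) ` simplex_set n (fst T)"
    using simplex_set_frame_homothetic[OF F R vertex_T0] by (auto simp: ref_frame_def)
  have len: "0 < fr_len F" and "1 \<le> n" using is_frameD(1)[OF F] g0 by auto
  then have "shape_reg (simplex_set n (fst T))
      \<le> fr_len F * frame_ratio n F ?R * (frame_ratio n ?R F / fr_len F) * shape_reg (simplex_set n ?v)"
    using frame_ratio_pos inner_diam_simplex_set_pos[OF n v]
    by (intro shape_reg_le_mutually_homothetic[OF up down] simplex_set_bounded simplex_set_nonempty) auto
  also have "\<dots> = frame_ratio n F ?R * frame_ratio n ?R F * shape_reg (simplex_set n ?v)"
    using len by simp
  also have "\<dots> \<le> (5/4 * real n)\<^sup>2 * shape_reg (simplex_set n ?v)"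
    by (intro mult_right_mono frame_ratio_mult_le shape_reg_nonneg simplex_set_bounded simplex_set_nonempty)
  finally show ?thesis .
qed

section \<open>The Kuhn simplex\<close>

lemma convex_on_infdist:
  fixes S :: "'a::real_normed_vector set"
  assumes "convex S" and "S \<noteq> {}"
  shows "convex_on UNIV (\<lambda>x. infdist x S)"
proof (rule convex_onI[OF _ convex_UNIV])
  fix t :: real and x y :: 'a assume t: "0 < t" "t < 1"
  let ?z = "(1 - t) *\<^sub>R x + t *\<^sub>R y"
  have ge: "c \<le> infdist p S" if "\<And>a. a \<in> S \<Longrightarrow> c \<le> dist p a" for c p
    unfolding infdist_notempty[OF assms(2)] using that assms(2) by (intro cINF_greatest) auto
  have main: "infdist ?z S \<le> (1 - t) * dist x a + t * dist y b" if "a \<in> S" "b \<in> S" for a b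
  proof -
    have "(1 - t) *\<^sub>R a + t *\<^sub>R b \<in> S" using convexD[OF assms(1) that] t by simp
    then have "infdist ?z S \<le> dist ?z ((1 - t) *\<^sub>R a + t *\<^sub>R b)" by (rule infdist_le)
    also have "\<dots> = norm ((1 - t) *\<^sub>R (x - a) + t *\<^sub>R (y - b))"
      by (simp add: dist_norm algebra_simps)
    also have "\<dots> \<le> (1 - t) * dist x a + t * dist y b"
      using norm_triangle_ineq[of "(1 - t) *\<^sub>R (x - a)" "t *\<^sub>R (y - b)"] t by (simp add: dist_norm)
    finally show ?thesis .
  qed
  have x_bound: "(infdist ?z S - t * dist y b) / (1 - t) \<le> infdist x S" if "b \<in> S" for b
  proof (rule ge)
    fix a assume "a \<in> S"
    then show "(infdist ?z S - t * dist y b) / (1 - t) \<le> dist x a"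
      using main[OF _ that] t by (simp add: field_simps)
  qed
  have "(infdist ?z S - (1 - t) * infdist x S) / t \<le> infdist y S"
  proof (rule ge)
    fix b assume "b \<in> S"
    then show "(infdist ?z S - (1 - t) * infdist x S) / t \<le> dist y b"
      using x_bound[of b] t by (simp add: field_simps)
  qed
  then show "infdist ?z S \<le> (1 - t) * infdist x S + t * infdist y S"
    using t by (simp add: field_simps)
qed

text \<open>Padding by \<open>1\<close> at index \<open>0\<close> and by \<open>0\<close> beyond \<open>n\<close> makes the consecutive differences
  \<open>kuhn_bary\<close> the barycentric coordinates with respect to the Kuhn simplex.\<close>

definition kuhn_coord :: "nat \<Rightarrow> (nat \<Rightarrow> 'a::euclidean_space) \<Rightarrow> nat \<Rightarrow> 'a \<Rightarrow> real" where
  "kuhn_coord n \<pi> k x = (if k = 0 then 1 else if k \<le> n then x \<bullet> \<pi> k else 0)"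

definition kuhn_bary :: "nat \<Rightarrow> (nat \<Rightarrow> 'a::euclidean_space) \<Rightarrow> nat \<Rightarrow> 'a \<Rightarrow> real" where
  "kuhn_bary n \<pi> i x = kuhn_coord n \<pi> i x - kuhn_coord n \<pi> (Suc i) x"

lemma kuhn_bary_sum: "(\<Sum>i\<le>n. kuhn_bary n \<pi> i x) = 1"
proof -
  have "(\<Sum>i\<le>n. kuhn_bary n \<pi> i x) = kuhn_coord n \<pi> 0 x - kuhn_coord n \<pi> (Suc n) x"
    unfolding kuhn_bary_def by (rule sum_telescope)
  then show ?thesis by (simp add: kuhn_coord_def)
qed

lemma kuhn_bary_convex_combination:
  "u + v = 1 \<Longrightarrow> kuhn_bary n \<pi> i (u *\<^sub>R x + v *\<^sub>R y) = u * kuhn_bary n \<pi> i x + v * kuhn_bary n \<pi> i y"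
  by (auto simp: kuhn_bary_def kuhn_coord_def algebra_simps)

lemma kuhn_vertices_0: "kuhn_vertices \<pi> 0 = 0"
  by (simp add: kuhn_vertices_def)

context
  fixes \<pi> :: "nat \<Rightarrow> 'a::euclidean_space" and n :: nat
  assumes kuhn_basis: "bij_betw \<pi> {1..n} Basis"
begin

lemma kuhn_basis_in_Basis: "j \<in> {1..n} \<Longrightarrow> \<pi> j \<in> Basis"
  using kuhn_basis bij_betwE by blast

lemma inner_kuhn_basis:
  assumes "i \<in> {1..n}" and "j \<in> {1..n}"
  shows "\<pi> i \<bullet> \<pi> j = (if i = j then 1 else 0)"
proof -
  have "inj_on \<pi> {1..n}" using kuhn_basis by (rule bij_betw_imp_inj_on)
  then have "\<pi> i = \<pi> j \<longleftrightarrow> i = j" using inj_onD[of \<pi> "{1..n}" i j] assms by blast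
  moreover have "\<pi> i \<in> Basis" "\<pi> j \<in> Basis" using assms by (simp_all add: kuhn_basis_in_Basis)
  ultimately show ?thesis by (simp add: inner_Basis)
qed

lemma inner_kuhn_vertices:
  assumes "m \<in> {1..n}" and "j \<le> n"
  shows "kuhn_vertices \<pi> j \<bullet> \<pi> m = (if m \<le> j then 1 else 0)"
proof -
  have "kuhn_vertices \<pi> j \<bullet> \<pi> m = (\<Sum>l\<in>{1..j}. \<pi> l \<bullet> \<pi> m)"
    by (simp add: kuhn_vertices_def inner_sum_left)
  also have "\<dots> = (\<Sum>l\<in>{1..j}. if l = m then 1 else 0)"
  proof (rule sum.cong[OF refl])
    fix l assume "l \<in> {1..j}"
    then show "\<pi> l \<bullet> \<pi> m = (if l = m then 1 else 0)" using assms by (intro inner_kuhn_basis) auto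
  qed
  also have "\<dots> = (if m \<le> j then 1 else 0)" using assms by simp
  finally show ?thesis .
qed

lemma kuhn_coord_kuhn_vertices:
  "j \<le> n \<Longrightarrow> kuhn_coord n \<pi> k (kuhn_vertices \<pi> j) = (if k \<le> j then 1 else 0)"
  by (cases "k = 0") (simp_all add: kuhn_coord_def inner_kuhn_vertices)

lemma kuhn_bary_kuhn_vertices:
  "j \<le> n \<Longrightarrow> kuhn_bary n \<pi> i (kuhn_vertices \<pi> j) = (if i = j then 1 else 0)"
  by (simp add: kuhn_bary_def kuhn_coord_kuhn_vertices)

lemma kuhn_bary_combination: "(\<Sum>i\<le>n. kuhn_bary n \<pi> i x *\<^sub>R kuhn_vertices \<pi> i) = x"
proof (rule euclidean_eqI)
  fix b :: 'a assume "b \<in> Basis"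
  then have "b \<in> \<pi> ` {1..n}" using kuhn_basis by (simp add: bij_betw_def)
  then obtain m where m: "m \<in> {1..n}" "b = \<pi> m" by blast
  have "(\<Sum>i\<le>n. kuhn_bary n \<pi> i x *\<^sub>R kuhn_vertices \<pi> i) \<bullet> \<pi> m
      = (\<Sum>i\<in>{m..n}. kuhn_bary n \<pi> i x)"
  proof -
    have "{i\<in>{..n}. m \<le> i} = {m..n}" by auto
    then show ?thesis
      using m by (simp add: inner_sum_left inner_kuhn_vertices sum.inter_filter[symmetric] if_distrib
          cong: if_cong)
  qed
  also have "\<dots> = kuhn_coord n \<pi> m x - kuhn_coord n \<pi> (Suc n) x"
    unfolding kuhn_bary_def using m by (intro sum_telescope_atLeastAtMost) auto
  also have "\<dots> = x \<bullet> \<pi> m" using m by (simp add: kuhn_coord_def)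
  finally show "(\<Sum>i\<le>n. kuhn_bary n \<pi> i x *\<^sub>R kuhn_vertices \<pi> i) \<bullet> b = x \<bullet> b" using m by simp
qed

lemma kuhn_bary_lipschitz: "\<bar>kuhn_bary n \<pi> i x - kuhn_bary n \<pi> i y\<bar> \<le> 2 * dist x y"
proof -
  have coord: "\<bar>kuhn_coord n \<pi> k x - kuhn_coord n \<pi> k y\<bar> \<le> dist x y" for k
  proof (cases "k \<in> {1..n}")
    case True
    then have "\<bar>(x - y) \<bullet> \<pi> k\<bar> \<le> norm (x - y)" by (intro Basis_le_norm kuhn_basis_in_Basis)
    then show ?thesis using True by (simp add: kuhn_coord_def dist_norm inner_diff_left)
  qed (auto simp: kuhn_coord_def)
  show ?thesis using coord[of i] coord[of "Suc i"] by (simp add: kuhn_bary_def)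
qed

lemma mem_kuhn_simplex_iff:
  "x \<in> simplex_set n (kuhn_vertices \<pi>) \<longleftrightarrow> (\<forall>i\<le>n. 0 \<le> kuhn_bary n \<pi> i x)"
proof
  have "simplex_set n (kuhn_vertices \<pi>) \<subseteq> {x. \<forall>i\<le>n. 0 \<le> kuhn_bary n \<pi> i x}"
    unfolding simplex_set_def
    by (rule hull_minimal) (auto simp: kuhn_bary_kuhn_vertices kuhn_bary_convex_combination intro!: convexI)
  then show "x \<in> simplex_set n (kuhn_vertices \<pi>) \<Longrightarrow> \<forall>i\<le>n. 0 \<le> kuhn_bary n \<pi> i x" by blast
next
  assume "\<forall>i\<le>n. 0 \<le> kuhn_bary n \<pi> i x"
  then have "(\<Sum>i\<in>{..n}. kuhn_bary n \<pi> i x *\<^sub>R kuhn_vertices \<pi> i) \<in> convex hull (kuhn_vertices \<pi> ` {..n})"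
    by (intro convex_sum convex_convex_hull kuhn_bary_sum) (auto intro: hull_inc)
  then show "x \<in> simplex_set n (kuhn_vertices \<pi>)" by (simp add: simplex_set_def kuhn_bary_combination)
qed

lemma kuhn_bary_facet:
  assumes "i \<le> n" and "y \<in> convex hull (kuhn_vertices \<pi> ` ({..n} - {i}))"
  shows "kuhn_bary n \<pi> i y = 0"
proof -
  have "convex hull (kuhn_vertices \<pi> ` ({..n} - {i})) \<subseteq> {x. kuhn_bary n \<pi> i x = 0}"
    by (rule hull_minimal) (auto simp: kuhn_bary_kuhn_vertices kuhn_bary_convex_combination intro!: convexI)
  then show ?thesis using assms(2) by blast
qed

lemma norm_kuhn_vertices_last: "norm (kuhn_vertices \<pi> n) = sqrt (real n)"
proof -
  have "kuhn_vertices \<pi> n \<bullet> kuhn_vertices \<pi> n = (\<Sum>l\<in>{1..n}. kuhn_vertices \<pi> n \<bullet> \<pi> l)"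
    by (simp add: kuhn_vertices_def inner_sum_right)
  also have "\<dots> = (\<Sum>l\<in>{1..n}. 1)" by (rule sum.cong) (simp_all add: inner_kuhn_vertices)
  finally show ?thesis by (simp add: norm_eq_sqrt_inner)
qed

lemma outer_diam_kuhn_simplex_ge: "sqrt (real n) \<le> outer_diam (simplex_set n (kuhn_vertices \<pi>))"
proof (rule outer_diam_ge[OF simplex_set_bounded])
  fix c r assume "simplex_set n (kuhn_vertices \<pi>) \<subseteq> cball c r"
  then have "dist c (kuhn_vertices \<pi> 0) \<le> r" "dist c (kuhn_vertices \<pi> n) \<le> r"
    using vertex_in_simplex_set[of 0 n "kuhn_vertices \<pi>"] vertex_in_simplex_set[of n n "kuhn_vertices \<pi>"]
    by (meson le0 order_refl mem_cball subsetD)+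
  moreover have "dist (kuhn_vertices \<pi> 0) (kuhn_vertices \<pi> n) = sqrt (real n)"
    by (simp add: kuhn_vertices_0 norm_kuhn_vertices_last)
  ultimately show "sqrt (real n) \<le> 2 * r"
    using dist_triangle3[of "kuhn_vertices \<pi> 0" "kuhn_vertices \<pi> n" c] by linarith
qed

lemma diameter_kuhn_simplex_ge: "sqrt (real n) \<le> diameter (simplex_set n (kuhn_vertices \<pi>))"
proof -
  have "dist (kuhn_vertices \<pi> 0) (kuhn_vertices \<pi> n) \<le> diameter (simplex_set n (kuhn_vertices \<pi>))"
    by (intro diameter_bounded_bound simplex_set_bounded vertex_in_simplex_set) auto
  then show ?thesis by (simp add: kuhn_vertices_0 norm_kuhn_vertices_last)
qed

lemma inner_diam_kuhn_simplex_pos: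
  assumes "1 \<le> n"
  shows "0 < inner_diam (simplex_set n (kuhn_vertices \<pi>))"
proof -
  \<comment> \<open>the barycentre \<open>c\<close> has all barycentric coordinates \<open>1/(n+1)\<close>\<close>
  define c where "c = (\<Sum>l\<in>{1..n}. ((real n + 1 - real l) / (real n + 1)) *\<^sub>R \<pi> l)"
  have "c \<bullet> \<pi> m = (real n + 1 - real m) / (real n + 1)" if "m \<in> {1..n}" for m
  proof -
    have "c \<bullet> \<pi> m = (\<Sum>l\<in>{1..n}. (real n + 1 - real l) / (real n + 1) * (if l = m then 1 else 0))"
      unfolding c_def inner_sum_left by (rule sum.cong) (use inner_kuhn_basis that in auto)
    then show ?thesis using that by (simp add: if_distrib cong: if_cong)
  qed
  then have coord: "kuhn_coord n \<pi> k c = (real n + 1 - real k) / (real n + 1)" if "k \<le> Suc n" for k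
    using that by (cases "k = 0"; cases "k = Suc n") (auto simp: kuhn_coord_def)
  have bary_c: "kuhn_bary n \<pi> i c = 1 / (real n + 1)" if "i \<le> n" for i
    using that coord[of i] coord[of "Suc i"] by (simp add: kuhn_bary_def field_simps)
  have "cball c (1 / (2 * (real n + 1))) \<subseteq> simplex_set n (kuhn_vertices \<pi>)"
  proof
    fix x assume x: "x \<in> cball c (1 / (2 * (real n + 1)))"
    have "2 * dist c x \<le> 1 / (real n + 1)" using x by (simp add: field_simps)
    then have "0 \<le> kuhn_bary n \<pi> i x" if "i \<le> n" for i
      using kuhn_bary_lipschitz[of i c x] bary_c[OF that] unfolding abs_le_iff by linarith
    then show "x \<in> simplex_set n (kuhn_vertices \<pi>)" by (simp add: mem_kuhn_simplex_iff)
  qed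
  then have "2 * (1 / (2 * (real n + 1))) \<le> inner_diam (simplex_set n (kuhn_vertices \<pi>))"
    by (intro inner_diam_ge[OF simplex_set_bounded]) simp_all
  moreover have "0 < 2 * (1 / (2 * (real n + 1)))" by simp
  ultimately show ?thesis by linarith
qed

text \<open>A ball of radius \<open>\<rho>\<close> in the Kuhn simplex keeps distance \<open>\<rho>\<close> from the facets opposite
  \<open>0\<close> and \<open>n\<close>, and distance \<open>\<rho>\<close> along \<open>(\<pi> (i + 1) - \<pi> i) / sqrt 2\<close> from the other ones.\<close>

lemma inner_diam_kuhn_simplex_le:
  assumes "2 \<le> n"
  shows "inner_diam (simplex_set n (kuhn_vertices \<pi>)) \<le> 2 / (2 + (real n - 1) * sqrt 2)"
proof (rule inner_diam_le[OF simplex_set_nonempty])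
  fix c \<rho> assume \<rho>: "0 \<le> \<rho>" and ball: "cball c \<rho> \<subseteq> simplex_set n (kuhn_vertices \<pi>)"
  have inside: "0 \<le> kuhn_bary n \<pi> i (c + d)" if "norm d \<le> \<rho>" "i \<le> n" for d i
    using ball that by (auto simp: mem_kuhn_simplex_iff dist_norm subset_eq)
  have basis: "\<pi> i \<bullet> \<pi> j = (if i = j then 1 else 0)" if "i \<in> {1..n}" "j \<in> {1..n}" for i j
    using inner_kuhn_basis that by blast
  have first: "\<rho> \<le> kuhn_bary n \<pi> 0 c"
    using inside[of "\<rho> *\<^sub>R \<pi> 1" 0] \<rho> kuhn_basis_in_Basis[of 1] basis[of 1 1] assms
    by (simp add: kuhn_bary_def kuhn_coord_def inner_add_left)
  have last: "\<rho> \<le> kuhn_bary n \<pi> n c"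
    using inside[of "- \<rho> *\<^sub>R \<pi> n" n] \<rho> kuhn_basis_in_Basis[of n] basis[of n n] assms
    by (simp add: kuhn_bary_def kuhn_coord_def inner_diff_left)
  have middle: "sqrt 2 * \<rho> \<le> kuhn_bary n \<pi> i c" if "1 \<le> i" "i < n" for i
  proof -
    let ?d = "(\<rho> / sqrt 2) *\<^sub>R (\<pi> (Suc i) - \<pi> i)"
    have "norm (\<pi> (Suc i) - \<pi> i) = sqrt 2"
      using that basis[of i i] basis[of "Suc i" "Suc i"] basis[of i "Suc i"] basis[of "Suc i" i]
      by (simp add: norm_eq_sqrt_inner inner_diff_left inner_diff_right)
    then have "0 \<le> kuhn_bary n \<pi> i (c + ?d)" using \<rho> that by (intro inside) auto
    moreover have "kuhn_bary n \<pi> i (c + ?d) = kuhn_bary n \<pi> i c - 2 * (\<rho> / sqrt 2)"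
      using that basis[of i i] basis[of "Suc i" "Suc i"] basis[of i "Suc i"] basis[of "Suc i" i]
      by (simp add: kuhn_bary_def kuhn_coord_def inner_add_left inner_diff_left)
    moreover have "2 * (\<rho> / sqrt 2) = sqrt 2 * \<rho>"
      by (simp add: field_simps flip: real_sqrt_mult)
    ultimately show ?thesis by simp
  qed
  obtain m where m: "n = Suc m" using assms by (cases n) auto
  then have "(\<Sum>i=1..m. sqrt 2 * \<rho>) \<le> (\<Sum>i=1..m. kuhn_bary n \<pi> i c)"
    using middle by (intro sum_mono) auto
  moreover have "(\<Sum>i\<le>n. kuhn_bary n \<pi> i c) = kuhn_bary n \<pi> 0 c + (\<Sum>i=1..m. kuhn_bary n \<pi> i c) + kuhn_bary n \<pi> n c"
    unfolding m by (simp add: atMost_atLeast0 sum.atLeast_Suc_atMost)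
  ultimately have "\<rho> * (2 + (real n - 1) * sqrt 2) \<le> 1"
    using kuhn_bary_sum[of n \<pi> c] first last by (simp add: m algebra_simps)
  moreover have "0 < 2 + (real n - 1) * sqrt 2" using assms by (simp add: add_pos_nonneg)
  ultimately show "2 * \<rho> \<le> 2 / (2 + (real n - 1) * sqrt 2)" by (simp add: field_simps)
qed

lemma min_height_kuhn_simplex_pos:
  assumes "1 \<le> n"
  shows "0 < min_height n (kuhn_vertices \<pi>)"
proof -
  let ?K = "simplex_set n (kuhn_vertices \<pi>)" and ?F = "\<lambda>i. convex hull (kuhn_vertices \<pi> ` ({..n} - {i}))"
  have "0 < (SUP x\<in>?K. infdist x (?F i))" if i: "i \<le> n" for i
  proof -
    define j where "j = (if i = 0 then 1 else 0::nat)"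
    have jF: "kuhn_vertices \<pi> j \<in> ?F i" using assms by (intro hull_inc) (auto simp: j_def)
    have jK: "kuhn_vertices \<pi> j \<in> ?K" using assms by (intro vertex_in_simplex_set) (simp add: j_def)
    from jF have "?F i \<noteq> {}" by blast
    \<comment> \<open>\<open>kuhn_bary n \<pi> i\<close> is \<open>1\<close> at vertex \<open>i\<close>, vanishes on \<open>?F i\<close> and is \<open>2\<close>-Lipschitz\<close>
    have "1/2 \<le> infdist (kuhn_vertices \<pi> i) (?F i)"
      unfolding infdist_notempty[OF \<open>?F i \<noteq> {}\<close>]
    proof (rule cINF_greatest[OF \<open>?F i \<noteq> {}\<close>])
      fix y assume "y \<in> ?F i"
      then show "1/2 \<le> dist (kuhn_vertices \<pi> i) y"
        using kuhn_bary_lipschitz[of i "kuhn_vertices \<pi> i" y] kuhn_bary_facet[OF i]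
          kuhn_bary_kuhn_vertices[OF i, of i] by simp
    qed
    also have "\<dots> \<le> (SUP x\<in>?K. infdist x (?F i))"
    proof (rule cSUP_upper[OF vertex_in_simplex_set[OF i]])
      have "infdist x (?F i) \<le> diameter ?K" if "x \<in> ?K" for x
        using infdist_le[OF jF, of x] diameter_bounded_bound[OF simplex_set_bounded that jK] by simp
      then show "bdd_above ((\<lambda>x. infdist x (?F i)) ` ?K)"
        by (intro bdd_aboveI[where M = "diameter ?K"]) auto
    qed
    finally show ?thesis by simp
  qed
  then show ?thesis unfolding min_height_def by (subst Min_gr_iff) auto
qed

lemma min_height_kuhn_simplex_le:
  assumes "2 \<le> n"
  shows "min_height n (kuhn_vertices \<pi>) \<le> 1 / sqrt 2"
proof -
  let ?v = "kuhn_vertices \<pi>" and ?F = "convex hull (kuhn_vertices \<pi> ` ({..n} - {1}))"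
  have "min_height n ?v \<le> (SUP x\<in>simplex_set n ?v. infdist x ?F)"
    unfolding min_height_def using assms by (intro Min_le) auto
  also have "\<dots> \<le> 1 / sqrt 2"
  proof (rule cSUP_least[OF simplex_set_nonempty])
    have F: "convex ?F" "?F \<noteq> {}" by (auto simp: hull_inc)
    \<comment> \<open>the midpoint of \<open>v 0 = 0\<close> and \<open>v 2 = \<pi> 1 + \<pi> 2\<close> lies in the facet opposite \<open>v 1 = \<pi> 1\<close>\<close>
    have mid: "(1/2) *\<^sub>R ?v 0 + (1/2) *\<^sub>R ?v 2 \<in> ?F"
      using assms by (intro convexD[OF F(1)] hull_inc) auto
    have "dist (?v 1) ((1/2) *\<^sub>R ?v 0 + (1/2) *\<^sub>R ?v 2) = sqrt (1/2)"
      using inner_kuhn_basis[of 1 1] inner_kuhn_basis[of 2 2] inner_kuhn_basis[of 1 2]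
        inner_kuhn_basis[of 2 1] assms
      by (simp add: dist_norm norm_eq_sqrt_inner kuhn_vertices_def numeral_2_eq_2
          inner_diff_left inner_diff_right inner_add_left inner_add_right)
    also have "sqrt (1/2) = 1 / sqrt (2::real)" by (simp add: real_sqrt_divide)
    finally have dist_mid: "dist (?v 1) ((1/2) *\<^sub>R ?v 0 + (1/2) *\<^sub>R ?v 2) = 1 / sqrt 2" .
    have vertex: "infdist (?v j) ?F \<le> 1 / sqrt 2" if "j \<le> n" for j
    proof (cases "j = 1")
      case True
      then show ?thesis using infdist_le2[OF mid] dist_mid by simp
    next
      case False
      then have "?v j \<in> ?F" using that by (intro hull_inc) auto
      then show ?thesis by simp
    qed
    have "convex_on (convex hull (?v ` {..n})) (\<lambda>x. infdist x ?F)"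
      by (rule convex_on_subset[OF convex_on_infdist[OF F]]) auto
    then show "infdist x ?F \<le> 1 / sqrt 2" if "x \<in> simplex_set n ?v" for x
      using convex_on_convex_hull_bound[of "?v ` {..n}" "\<lambda>x. infdist x ?F" "1 / sqrt 2"] vertex that
      by (auto simp: simplex_set_def)
  qed
  finally show ?thesis .
qed

lemma kuhn_simplex_shape_height_ge:
  assumes "2 \<le> n"
  shows "(real n)\<^sup>2 \<le> shape_reg (simplex_set n (kuhn_vertices \<pi>))
    * (diameter (simplex_set n (kuhn_vertices \<pi>)) / min_height n (kuhn_vertices \<pi>))"
proof -
  let ?K = "simplex_set n (kuhn_vertices \<pi>)"
  define D where "D = 2 + (real n - 1) * sqrt 2"
  have D: "0 < D" using assms by (simp add: D_def add_pos_nonneg)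
  have r: "0 < inner_diam ?K" "inner_diam ?K \<le> 2 / D"
    using inner_diam_kuhn_simplex_pos inner_diam_kuhn_simplex_le assms by (auto simp: D_def)
  have w: "0 < min_height n (kuhn_vertices \<pi>)" "min_height n (kuhn_vertices \<pi>) \<le> 1 / sqrt 2"
    using min_height_kuhn_simplex_pos min_height_kuhn_simplex_le assms by auto
  have "sqrt (real n) * D / 2 \<le> shape_reg ?K"
  proof -
    have "sqrt (real n) / (2 / D) \<le> sqrt (real n) / inner_diam ?K"
      using r D by (intro divide_left_mono) auto
    also have "\<dots> \<le> shape_reg ?K"
      unfolding shape_reg_def using outer_diam_kuhn_simplex_ge r by (intro divide_right_mono) auto
    finally show ?thesis using D by simp
  qed
  moreover have "sqrt (real n) * sqrt 2 \<le> diameter ?K / min_height n (kuhn_vertices \<pi>)"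
  proof -
    have "sqrt (real n) / (1 / sqrt 2) \<le> sqrt (real n) / min_height n (kuhn_vertices \<pi>)"
      using w by (intro divide_left_mono) auto
    also have "\<dots> \<le> diameter ?K / min_height n (kuhn_vertices \<pi>)"
      using diameter_kuhn_simplex_ge w by (intro divide_right_mono) auto
    finally show ?thesis by simp
  qed
  ultimately have "sqrt (real n) * D / 2 * (sqrt (real n) * sqrt 2)
      \<le> shape_reg ?K * (diameter ?K / min_height n (kuhn_vertices \<pi>))"
    using D shape_reg_nonneg[OF simplex_set_bounded simplex_set_nonempty] by (intro mult_mono) auto
  moreover have "sqrt (real n) * D / 2 * (sqrt (real n) * sqrt 2) = real n * (real n - 1 + sqrt 2)"
  proof -
    have "a * (2 + (x - 1) * b) / 2 * (a * b) = (a * a) * (2 * b + (x - 1) * (b * b)) / 2"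
      for a b x :: real by (simp add: field_simps)
    from this[of "sqrt (real n)" "real n" "sqrt 2"] show ?thesis
      by (simp add: D_def field_simps)
  qed
  moreover have "(real n)\<^sup>2 \<le> real n * (real n - 1 + sqrt 2)"
    by (simp add: power2_eq_square mult_left_mono)
  ultimately show ?thesis by linarith
qed

end

theorem lemmaA4:
  fixes T0 :: "'a::euclidean_space tsimplex" and \<pi> :: "nat \<Rightarrow> 'a" and n :: nat
  assumes "n = DIM('a)" and "n \<ge> 2"
    and "is_tagged_nsimplex n T0"
    and "bij_betw \<pi> {1..n} Basis"
    and "T \<in> maubach_desc n T0"
  shows "shape_reg (simplex_set n (fst T))
    \<le> 2 * shape_reg (simplex_set n (kuhn_vertices \<pi>))
        * (diameter (simplex_set n (kuhn_vertices \<pi>)) / min_height n (kuhn_vertices \<pi>))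
        * shape_reg (simplex_set n (fst T0))"
proof -
  let ?K = "simplex_set n (kuhn_vertices \<pi>)" and ?\<gamma>0 = "shape_reg (simplex_set n (fst T0))"
  have \<gamma>0: "0 \<le> ?\<gamma>0" by (intro shape_reg_nonneg simplex_set_bounded simplex_set_nonempty)
  have "shape_reg (simplex_set n (fst T)) \<le> (5/4 * real n)\<^sup>2 * ?\<gamma>0"
    using assms(1,3,5) by (rule shape_reg_maubach_desc_le)
  also have "\<dots> \<le> 2 * (real n)\<^sup>2 * ?\<gamma>0"
  proof (rule mult_right_mono[OF _ \<gamma>0])
    have "(5/4 * real n)\<^sup>2 = 25/16 * (real n)\<^sup>2" by (simp add: power_divide power_mult_distrib)
    then show "(5/4 * real n)\<^sup>2 \<le> 2 * (real n)\<^sup>2" using zero_le_power2[of "real n"] by linarith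
  qed
  also have "\<dots> \<le> 2 * (shape_reg ?K * (diameter ?K / min_height n (kuhn_vertices \<pi>))) * ?\<gamma>0"
    using kuhn_simplex_shape_height_ge[OF assms(4,2)] \<gamma>0 by (intro mult_right_mono) auto
  finally show ?thesis by (simp add: mult.assoc)
qed

end
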